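(* For every drag $D$ there exists a drag expression all of whose drag components are atomic drags and whose evaluation yields $D$.
   Context: Fix a set $\mathcal{F}$ of function symbols, each with a fixed arity, and a set $\mathcal{X}$ of variables disjoint from $\mathcal{F}$. A drag is a tuple $D=\langle V,R,L,X,S\rangle$ where: $V$ is a finite set of vertices; $R:V\to\mathbb{N}$ is a finite multiset of vertices, the roots ($v$ is rooted if $R(v)>0$); $S\subseteq V$ is the set of sprouts and $I=V\setminus S$ the set of internal vertices; $L:V\to\mathcal{F}\cup\mathcal{X}$ labels internal vertices by function symbols and sprouts by variables; $X:V\to V^*$ assigns to each vertex a list of successors whose length is the arity of its label (sprouts have no successors). If $b$ is the $k$-th element of $X(a)$, then $(a,k,b)$ is an edge with tail $a$ and head $b$. $\mathrm{pred}(v,D)$ is the number of edges with head $v$. Two drags are disjoint if they share neither vertex nor variable; the sum $D\oplus D'$ of disjoint drags is their juxtaposition (union of vertices, roots, labels, edges and sprouts). An equimorphism is a bijection of vertices preserving labels, numbers of roots, and edges (with indices) in both directions. The subdrag of $D$ generated by a vertex $v$ consists of the vertices accessible from $v$ with their labels and edges, each such vertex $w$ getting as roots its roots in $D$ plus the number of edges into $w$ from vertices not accessible from $v$. A wire of a drag $D$ is a pair $s\rightsquigarrow r$ of vertices of $D$ with $s$ a sprout and $r\neq s$. For a set $W$ of wires, $s>_W r$ holds if $s\rightsquigarrow r\in W$, or $s\rightsquigarrow t\in W$ and $t>_W r$ for some $t$. $W$ is well-behaved if it is finite and (1) functional; (2) injective: for every vertex $r$, $\sum_{s>_W r}\mathrm{pred}(s,D)\le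 R(r)$; (3) the restriction of $>_W$ to pairs of sprouts is acyclic. The elementary wiring $D[s\rightsquigarrow r]$ removes the sprout $s$ (with its roots), replaces every edge $(v,i,s)$ by $(v,i,r)$, and sets the number of roots of $r$ to $R(r)-\mathrm{pred}(s,D)$. For well-behaved $W$, $D_\varnothing=D$ and $D_{\{s\rightsquigarrow r\}\cup W'}=(D[s\rightsquigarrow r])_{W'}$ with $s$ maximal for $>_W$ (choice-independent). The resolution of $t\in\mathrm{Dom}(W)$ is the $>_W$-minimal $r$ with $t>_W r$. $W$ is coherent if (1) when some sprout labeled $x$ is an origin of a wire, all sprouts labeled $x$ are; (2) for wires $s\rightsquigarrow r$, $s'\rightsquigarrow r'$ with same-labeled origins, the images of $r,r'$ under the map $D\to D_W$ (identity outside $\mathrm{Dom}(W)$, resolution on $\mathrm{Dom}(W)$) generate equimorphic subdrags of $D_W$. Given disjoint drags $D,D'$, a switchboard for $D,D'$ is a pair of partial functions $\xi_D$ from sprouts of $D$ to rooted vertices of $D'$ and $\xi_{D'}$ from sprouts of $D'$ to rooted vertices of $D$, such that $\xi=\xi_D\cup\xi_{D'}$ is a coherent well-behaved set of wires of $D\oplus D'$. Their product is $D\otimes_\xi D'=(D\oplus D')_\xi$. A drag expression is an expression built, by means of sums $\oplus$ and products $\otimes_\xi$ (with $\xi$ a switchboard for the values of the two arguments), from a set of drags $\{D_i\}_i$, its drag components, such that $D_i$ and $D_j$ share no vertex and no variable for $i\neq j$. An atomic drag is either (a) an atomic vertex: a drag with exactly one internal vertex, carrying any number of roots, whose successors are sprouts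 that are pairwise distinct and carry pairwise distinct labels; or (b) an atomic set of sprouts: a drag with no internal vertex consisting of a nonempty set of pairwise distinct sprouts all labeled by the same variable, each with any number of roots. *)

theory Defs
  imports Main
begin

datatype ('f, 'x) lab = Fn 'f | Vr 'x

text \<open>A drag V,R,L,X,S. R is a multiset of vertices given by its multiplicity function
(zero outside V). The values of L and X outside V are irrelevant.\<close>
record ('v, 'f, 'x) drag =
  dV :: "'v set"
  dR :: "'v \<Rightarrow> nat"
  dL :: "'v \<Rightarrow> ('f, 'x) lab"
  dX :: "'v \<Rightarrow> 'v list"
  dS :: "'v set"

definition is_drag :: "('f \<Rightarrow> nat) \<Rightarrow> ('v, 'f, 'x) drag \<Rightarrow> bool" where
  "is_drag ar D \<longleftrightarrow>
     finite (dV D) \<and> dS D \<subseteq> dV D \<and>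
     (\<forall>v. v \<notin> dV D \<longrightarrow> dR D v = 0) \<and>
     (\<forall>v\<in>dS D. (\<exists>x. dL D v = Vr x) \<and> dX D v = []) \<and>
     (\<forall>v\<in>dV D - dS D. \<exists>f. dL D v = Fn f \<and> length (dX D v) = ar f) \<and>
     (\<forall>v\<in>dV D. set (dX D v) \<subseteq> dV D)"

text \<open>Edges (a,k,b): b is the k-th successor of a (indices counted from 0).\<close>
definition edges :: "('v, 'f, 'x) drag \<Rightarrow> ('v \<times> nat \<times> 'v) set" where
  "edges D = {(a, k, b). a \<in> dV D \<and> k < length (dX D a) \<and> dX D a ! k = b}"

definition pred :: "'v \<Rightarrow> ('v, 'f, 'x) drag \<Rightarrow> nat" where
  "pred v D = card {e \<in> edges D. snd (snd e) = v}"

definition dvars :: "('v, 'f, 'x) drag \<Rightarrow> 'x set" where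
  "dvars D = {x. \<exists>v\<in>dV D. dL D v = Vr x}"

definition disjoint_drags :: "('v, 'f, 'x) drag \<Rightarrow> ('v, 'f, 'x) drag \<Rightarrow> bool" where
  "disjoint_drags D D' \<longleftrightarrow> dV D \<inter> dV D' = {} \<and> dvars D \<inter> dvars D' = {}"

definition dsum :: "('v, 'f, 'x) drag \<Rightarrow> ('v, 'f, 'x) drag \<Rightarrow> ('v, 'f, 'x) drag" where
  "dsum D D' = \<lparr> dV = dV D \<union> dV D',
                 dR = (\<lambda>v. dR D v + dR D' v),
                 dL = (\<lambda>v. if v \<in> dV D then dL D v else dL D' v),
                 dX = (\<lambda>v. if v \<in> dV D then dX D v else dX D' v),
                 dS = dS D \<union> dS D' \<rparr>"

text \<open>Equality of drags as mathematical objects (data outside V ignored).\<close>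
definition same_drag :: "('v, 'f, 'x) drag \<Rightarrow> ('v, 'f, 'x) drag \<Rightarrow> bool" where
  "same_drag D D' \<longleftrightarrow> dV D = dV D' \<and> dS D = dS D' \<and> (\<forall>v. dR D v = dR D' v) \<and>
     (\<forall>v\<in>dV D. dL D v = dL D' v \<and> dX D v = dX D' v)"

definition equimorphism :: "('v \<Rightarrow> 'v) \<Rightarrow> ('v, 'f, 'x) drag \<Rightarrow> ('v, 'f, 'x) drag \<Rightarrow> bool" where
  "equimorphism h D D' \<longleftrightarrow> bij_betw h (dV D) (dV D') \<and>
     (\<forall>v\<in>dV D. dL D' (h v) = dL D v \<and> dR D' (h v) = dR D v \<and>
                (h v \<in> dS D' \<longleftrightarrow> v \<in> dS D) \<and> dX D' (h v) = map h (dX D v))"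

definition equimorphic :: "('v, 'f, 'x) drag \<Rightarrow> ('v, 'f, 'x) drag \<Rightarrow> bool" where
  "equimorphic D D' \<longleftrightarrow> (\<exists>h. equimorphism h D D')"

definition succ_rel :: "('v, 'f, 'x) drag \<Rightarrow> ('v \<times> 'v) set" where
  "succ_rel D = {(a, b). a \<in> dV D \<and> b \<in> set (dX D a)}"

definition accessible :: "('v, 'f, 'x) drag \<Rightarrow> 'v \<Rightarrow> 'v set" where
  "accessible D v = {w. (v, w) \<in> (succ_rel D)\<^sup>*}"

definition subdrag :: "('v, 'f, 'x) drag \<Rightarrow> 'v \<Rightarrow> ('v, 'f, 'x) drag" where
  "subdrag D v = \<lparr> dV = accessible D v,
     dR = (\<lambda>w. if w \<in> accessible D v then
                  dR D w + card {e \<in> edges D. fst e \<notin> accessible D v \<and> snd (snd e) = w}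
                else 0),
     dL = dL D, dX = dX D, dS = dS D \<inter> accessible D v \<rparr>"

definition is_wires :: "('v, 'f, 'x) drag \<Rightarrow> ('v \<times> 'v) set \<Rightarrow> bool" where
  "is_wires D W \<longleftrightarrow> (\<forall>(s, r)\<in>W. s \<in> dS D \<and> r \<in> dV D \<and> r \<noteq> s)"

text \<open>s >_W r is (s,r) \<in> W^+.\<close>
definition well_behaved :: "('v, 'f, 'x) drag \<Rightarrow> ('v \<times> 'v) set \<Rightarrow> bool" where
  "well_behaved D W \<longleftrightarrow> is_wires D W \<and> finite W \<and>
     (\<forall>s r r'. (s, r) \<in> W \<longrightarrow> (s, r') \<in> W \<longrightarrow> r = r') \<and>
     (\<forall>r. (\<Sum>s\<in>{s. (s, r) \<in> W\<^sup>+}. pred s D) \<le> dR D r) \<and>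
     acyclic (W\<^sup>+ \<inter> (dS D \<times> dS D))"

definition elem_wire :: "('v, 'f, 'x) drag \<Rightarrow> 'v \<Rightarrow> 'v \<Rightarrow> ('v, 'f, 'x) drag" where
  "elem_wire D s r = \<lparr> dV = dV D - {s},
     dR = (\<lambda>v. if v = s then 0 else if v = r then dR D r - pred s D else dR D v),
     dL = dL D,
     dX = (\<lambda>v. map (\<lambda>w. if w = s then r else w) (dX D v)),
     dS = dS D - {s} \<rparr>"

text \<open>wiring D W D' : D' = D_W, computed recursively by wiring a >_W-maximal origin first
(the result is independent of the choices).\<close>
inductive wiring :: "('v, 'f, 'x) drag \<Rightarrow> ('v \<times> 'v) set \<Rightarrow> ('v, 'f, 'x) drag \<Rightarrow> bool" where
  wiring_empty: "wiring D {} D"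
| wiring_step: "\<lbrakk>(s, r) \<in> W; \<not> (\<exists>t. (t, s) \<in> W\<^sup>+);
                 wiring (elem_wire D s r) (W - {(s, r)}) D'\<rbrakk> \<Longrightarrow> wiring D W D'"

text \<open>Resolution: the >_W-minimal r with t >_W r.\<close>
definition resolution :: "('v \<times> 'v) set \<Rightarrow> 'v \<Rightarrow> 'v" where
  "resolution W t = (THE r. (t, r) \<in> W\<^sup>+ \<and> r \<notin> Domain W)"

definition wire_image :: "('v \<times> 'v) set \<Rightarrow> 'v \<Rightarrow> 'v" where
  "wire_image W v = (if v \<in> Domain W then resolution W v else v)"

definition coherent :: "('v, 'f, 'x) drag \<Rightarrow> ('v \<times> 'v) set \<Rightarrow> ('v, 'f, 'x) drag \<Rightarrow> bool" where
  "coherent D W DW \<longleftrightarrow>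
     (\<forall>x. (\<exists>s\<in>Domain W. dL D s = Vr x) \<longrightarrow> (\<forall>s\<in>dS D. dL D s = Vr x \<longrightarrow> s \<in> Domain W)) \<and>
     (\<forall>s r s' r'. (s, r) \<in> W \<longrightarrow> (s', r') \<in> W \<longrightarrow> dL D s = dL D s' \<longrightarrow>
        equimorphic (subdrag DW (wire_image W r)) (subdrag DW (wire_image W r')))"

definition switchboard ::
  "('v, 'f, 'x) drag \<Rightarrow> ('v, 'f, 'x) drag \<Rightarrow> ('v \<times> 'v) set \<Rightarrow> ('v \<times> 'v) set \<Rightarrow> bool" where
  "switchboard D D' xi xi' \<longleftrightarrow>
     (\<forall>(s, r)\<in>xi. s \<in> dS D \<and> r \<in> dV D' \<and> dR D' r > 0) \<and>
     (\<forall>s r r'. (s, r) \<in> xi \<longrightarrow> (s, r') \<in> xi \<longrightarrow> r = r') \<and>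
     (\<forall>(s, r)\<in>xi'. s \<in> dS D' \<and> r \<in> dV D \<and> dR D r > 0) \<and>
     (\<forall>s r r'. (s, r) \<in> xi' \<longrightarrow> (s, r') \<in> xi' \<longrightarrow> r = r') \<and>
     well_behaved (dsum D D') (xi \<union> xi') \<and>
     (\<exists>DW. wiring (dsum D D') (xi \<union> xi') DW \<and> coherent (dsum D D') (xi \<union> xi') DW)"

datatype ('v, 'f, 'x) dexp =
    Comp "('v, 'f, 'x) drag"
  | DSum "('v, 'f, 'x) dexp" "('v, 'f, 'x) dexp"
  | DProd "('v, 'f, 'x) dexp" "('v \<times> 'v) set" "('v \<times> 'v) set" "('v, 'f, 'x) dexp"

fun components :: "('v, 'f, 'x) dexp \<Rightarrow> ('v, 'f, 'x) drag list" where
  "components (Comp D) = [D]"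
| "components (DSum E1 E2) = components E1 @ components E2"
| "components (DProd E1 xi xi' E2) = components E1 @ components E2"

inductive eval :: "('f \<Rightarrow> nat) \<Rightarrow> ('v, 'f, 'x) dexp \<Rightarrow> ('v, 'f, 'x) drag \<Rightarrow> bool" for ar where
  eval_comp: "is_drag ar D \<Longrightarrow> eval ar (Comp D) D"
| eval_sum: "\<lbrakk>eval ar E1 D1; eval ar E2 D2; disjoint_drags D1 D2\<rbrakk>
               \<Longrightarrow> eval ar (DSum E1 E2) (dsum D1 D2)"
| eval_prod: "\<lbrakk>eval ar E1 D1; eval ar E2 D2; disjoint_drags D1 D2; switchboard D1 D2 xi xi';
               wiring (dsum D1 D2) (xi \<union> xi') D\<rbrakk>
               \<Longrightarrow> eval ar (DProd E1 xi xi' E2) D"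

definition drag_expression :: "('v, 'f, 'x) dexp \<Rightarrow> bool" where
  "drag_expression E \<longleftrightarrow> (let cs = components E in
     \<forall>i<length cs. \<forall>j<length cs. i \<noteq> j \<longrightarrow> disjoint_drags (cs ! i) (cs ! j))"

definition atomic_vertex :: "('f \<Rightarrow> nat) \<Rightarrow> ('v, 'f, 'x) drag \<Rightarrow> bool" where
  "atomic_vertex ar D \<longleftrightarrow> is_drag ar D \<and>
     (\<exists>v. dV D - dS D = {v} \<and> dS D = set (dX D v) \<and> distinct (dX D v) \<and>
          inj_on (dL D) (set (dX D v)))"

definition atomic_sprouts :: "('f \<Rightarrow> nat) \<Rightarrow> ('v, 'f, 'x) drag \<Rightarrow> bool" where
  "atomic_sprouts ar D \<longleftrightarrow> is_drag ar D \<and> dS D = dV D \<and> dV D \<noteq> {} \<and>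
     (\<exists>x. \<forall>s\<in>dS D. dL D s = Vr x)"

definition atomic_drag :: "('f \<Rightarrow> nat) \<Rightarrow> ('v, 'f, 'x) drag \<Rightarrow> bool" where
  "atomic_drag ar D \<longleftrightarrow> atomic_vertex ar D \<or> atomic_sprouts ar D"

end

theory Submission
  imports Defs
begin

text \<open>Cut every edge of D: the edge in slot (a,k), pointing to b, is replaced by a fresh sprout
  port (a,k), which becomes the k-th successor of a, and by a fresh sprout relay (a,k) with one
  root. Each internal vertex together with its ports is an atomic vertex, the sprouts of D with a
  common label form an atomic set of sprouts, and each relay is an atomic set of one sprout.
  D is the product of the sum of the first two kinds of pieces with the sum of the relays, along
  the switchboard port (a,k) \<leadsto> relay (a,k), relay (a,k) \<leadsto> b. The detour through the relay is
  needed because a switchboard only connects sprouts of one factor to vertices of the other; the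
  roots that b must offer to these wires are added to b beforehand and consumed by the wiring.
  Ports and relays carry pairwise distinct fresh variables, which makes the switchboard coherent.\<close>

lemma exists_inj_on_fresh:
  assumes "finite (A :: 'a set)" "finite (B :: 'b set)" "infinite (UNIV :: 'b set)"
  shows "\<exists>g :: 'a \<Rightarrow> 'b. inj_on g A \<and> g ` A \<inter> B = {}"
proof -
  have "infinite (UNIV - B)" using assms by (simp add: Diff_infinite_finite)
  then obtain T where T: "T \<subseteq> UNIV - B" "finite T" "card T = card A"
    using infinite_arbitrarily_large by blast
  then obtain g where "bij_betw g A T" using finite_same_card_bij assms(1) by metis
  then show ?thesis using T unfolding bij_betw_def by blast
qed

lemma equimorphic_refl: "equimorphic D D"
  unfolding equimorphic_def equimorphism_def by (rule exI[of _ id]) (simp add: bij_betw_id)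

lemma finite_dvars: "is_drag ar D \<Longrightarrow> finite (dvars D)"
proof -
  assume "is_drag ar D"
  then have "finite (dV D)" unfolding is_drag_def by blast
  moreover have "dvars D \<subseteq> (\<lambda>v. case dL D v of Vr x \<Rightarrow> x) ` dV D"
    unfolding dvars_def by force
  ultimately show ?thesis using finite_surj by blast
qed

definition edge_slots :: "('v, 'f, 'x) drag \<Rightarrow> ('v \<times> nat) set" where
  "edge_slots D = Sigma (dV D) (\<lambda>a. {..<length (dX D a)})"

lemma finite_edge_slots: "is_drag ar D \<Longrightarrow> finite (edge_slots D)"
  unfolding edge_slots_def is_drag_def by auto

fun sum_expr :: "('v set \<Rightarrow> ('v, 'f, 'x) drag) \<Rightarrow> 'v set list \<Rightarrow> ('v, 'f, 'x) dexp" where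
  "sum_expr c [] = Comp (c {})"
| "sum_expr c [V] = Comp (c V)"
| "sum_expr c (V # W # Vs) = DSum (Comp (c V)) (sum_expr c (W # Vs))"

lemma components_sum_expr: "Vs \<noteq> [] \<Longrightarrow> components (sum_expr c Vs) = map c Vs"
  by (induction c Vs rule: sum_expr.induct) auto

locale edge_cutting =
  fixes ar :: "'f \<Rightarrow> nat" and D :: "('v, 'f, 'x) drag"
    and port relay :: "'v \<times> nat \<Rightarrow> 'v" and port_var relay_var :: "'v \<times> nat \<Rightarrow> 'x"
  assumes drag_D: "is_drag ar D"
    and inj_port: "inj_on port (edge_slots D)" and inj_relay: "inj_on relay (edge_slots D)"
    and ports_relays_disjoint: "port ` edge_slots D \<inter> relay ` edge_slots D = {}"
    and fresh_vertices: "(port ` edge_slots D \<union> relay ` edge_slots D) \<inter> dV D = {}"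
    and inj_port_var: "inj_on port_var (edge_slots D)"
    and inj_relay_var: "inj_on relay_var (edge_slots D)"
    and port_relay_vars_disjoint: "port_var ` edge_slots D \<inter> relay_var ` edge_slots D = {}"
    and fresh_vars: "(port_var ` edge_slots D \<union> relay_var ` edge_slots D) \<inter> dvars D = {}"
begin

abbreviation "Slots \<equiv> edge_slots D"
abbreviation "Ports \<equiv> port ` Slots"
abbreviation "Relays \<equiv> relay ` Slots"
abbreviation "Vcut \<equiv> dV D \<union> Ports \<union> Relays"

lemma D_finite: "finite (dV D)"
  and D_sprouts_subset: "dS D \<subseteq> dV D"
  and D_roots_outside: "\<And>v. v \<notin> dV D \<Longrightarrow> dR D v = 0"
  and D_sprout_shape: "\<And>v. v \<in> dS D \<Longrightarrow> (\<exists>x. dL D v = Vr x) \<and> dX D v = []"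
  and D_internal_shape: "\<And>v. v \<in> dV D - dS D \<Longrightarrow> \<exists>f. dL D v = Fn f \<and> length (dX D v) = ar f"
  and D_succs_closed: "\<And>v. v \<in> dV D \<Longrightarrow> set (dX D v) \<subseteq> dV D"
  using drag_D unfolding is_drag_def by blast+

lemma finite_slots: "finite Slots"
  using finite_edge_slots[OF drag_D] .

lemma slots_iff: "(a, k) \<in> Slots \<longleftrightarrow> a \<in> dV D \<and> k < length (dX D a)"
  unfolding edge_slots_def by auto

lemma slot_internal: "(a, k) \<in> Slots \<Longrightarrow> a \<in> dV D - dS D"
  using D_sprout_shape slots_iff by force

lemma port_notin_dV: "e \<in> Slots \<Longrightarrow> port e \<notin> dV D"
  and relay_notin_dV: "e \<in> Slots \<Longrightarrow> relay e \<notin> dV D"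
  and port_neq_relay: "e \<in> Slots \<Longrightarrow> e' \<in> Slots \<Longrightarrow> port e \<noteq> relay e'"
  using fresh_vertices ports_relays_disjoint by blast+

lemma port_eq_iff: "e \<in> Slots \<Longrightarrow> e' \<in> Slots \<Longrightarrow> port e = port e' \<longleftrightarrow> e = e'"
  using inj_port by (auto dest: inj_onD)

lemma relay_eq_iff: "e \<in> Slots \<Longrightarrow> e' \<in> Slots \<Longrightarrow> relay e = relay e' \<longleftrightarrow> e = e'"
  using inj_relay by (auto dest: inj_onD)

definition head :: "'v \<times> nat \<Rightarrow> 'v" where
  "head e = dX D (fst e) ! snd e"

lemma head_in_dV: "e \<in> Slots \<Longrightarrow> head e \<in> dV D"
  using D_succs_closed slots_iff unfolding head_def by (cases e) (auto simp: subset_iff)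

subsection \<open>The cut drag and its pieces\<close>

definition lab :: "'v \<Rightarrow> ('f, 'x) lab" where
  "lab v = (if v \<in> dV D then dL D v
            else if v \<in> Ports then Vr (port_var (the_inv_into Slots port v))
            else Vr (relay_var (the_inv_into Slots relay v)))"

definition succs :: "'v \<Rightarrow> 'v list" where
  "succs v = (if v \<in> dV D - dS D then map (\<lambda>k. port (v, k)) [0..<length (dX D v)] else [])"

definition roots :: "'v \<Rightarrow> nat" where
  "roots v = (if v \<in> dV D then dR D v + card {e \<in> Slots. head e = v}
              else if v \<in> Relays then 1 else 0)"

definition cut_sprouts :: "'v set" where
  "cut_sprouts = dS D \<union> Ports \<union> Relays"

definition piece :: "'v set \<Rightarrow> ('v, 'f, 'x) drag" where
  "piece A = \<lparr> dV = A, dR = \<lambda>v. if v \<in> A then roots v else 0, dL = lab, dX = succs,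
               dS = A \<inter> cut_sprouts \<rparr>"

lemma piece_simps:
  "dV (piece A) = A" "dS (piece A) = A \<inter> cut_sprouts" "dL (piece A) = lab" "dX (piece A) = succs"
  "dR (piece A) v = (if v \<in> A then roots v else 0)"
  unfolding piece_def by simp_all

lemma lab_port: "e \<in> Slots \<Longrightarrow> lab (port e) = Vr (port_var e)"
  unfolding lab_def using port_notin_dV inj_port by (simp add: the_inv_into_f_f)

lemma lab_relay: "e \<in> Slots \<Longrightarrow> lab (relay e) = Vr (relay_var e)"
  unfolding lab_def using relay_notin_dV inj_relay ports_relays_disjoint
  by (auto simp add: the_inv_into_f_f)

lemma lab_dV: "v \<in> dV D \<Longrightarrow> lab v = dL D v"
  unfolding lab_def by simp

lemma set_succs_subset: "set (succs v) \<subseteq> Ports"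
  unfolding succs_def by (auto simp: slots_iff)

lemma succs_not_internal: "v \<notin> dV D - dS D \<Longrightarrow> succs v = []"
  unfolding succs_def by auto

lemma length_succs: "a \<in> dV D - dS D \<Longrightarrow> length (succs a) = length (dX D a)"
  unfolding succs_def by simp

lemma nth_succs:
  "k < length (succs a) \<Longrightarrow> (a, k) \<in> Slots \<and> succs a ! k = port (a, k)"
  unfolding succs_def by (auto split: if_splits simp: slots_iff)

lemma roots_outside: "v \<notin> Vcut \<Longrightarrow> roots v = 0"
  unfolding roots_def by auto

lemma lab_fresh_inj: "inj_on lab (Ports \<union> Relays)"
proof (rule inj_onI)
  fix u u' assume u: "u \<in> Ports \<union> Relays" and u': "u' \<in> Ports \<union> Relays" and eq: "lab u = lab u'"
  from u obtain e where e: "e \<in> Slots" "u = port e \<or> u = relay e" by blast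
  from u' obtain e' where e': "e' \<in> Slots" "u' = port e' \<or> u' = relay e'" by blast
  have "port_var e \<noteq> relay_var e'" "relay_var e \<noteq> port_var e'"
    using port_relay_vars_disjoint e(1) e'(1) by blast+
  with e e' eq show "u = u'"
    by (elim disjE)
      (auto simp: lab_port lab_relay inj_on_eq_iff[OF inj_port_var] inj_on_eq_iff[OF inj_relay_var])
qed

lemma lab_fresh_var: "u \<in> Ports \<union> Relays \<Longrightarrow> lab u = Vr y \<Longrightarrow> y \<notin> dvars D"
  using fresh_vars by (auto simp: lab_port lab_relay)

lemma lab_dV_var: "u \<in> dV D \<Longrightarrow> lab u = Vr y \<Longrightarrow> u \<in> dS D \<and> y \<in> dvars D"
  using D_internal_shape unfolding dvars_def by (force simp: lab_dV)

lemma same_var_lab: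
  assumes "v \<in> Vcut" "w \<in> Vcut" "lab v = Vr x" "lab w = Vr x"
  shows "v = w \<or> v \<in> dS D \<and> w \<in> dS D"
proof (cases "v \<in> dV D"; cases "w \<in> dV D")
  assume "v \<notin> dV D" "w \<notin> dV D"
  then show ?thesis using assms inj_onD[OF lab_fresh_inj, of v w] by auto
qed (use assms lab_dV_var lab_fresh_var in blast)+

lemma dsum_piece: "A \<inter> B = {} \<Longrightarrow> dsum (piece A) (piece B) = piece (A \<union> B)"
  unfolding dsum_def piece_def by (auto intro!: ext)

lemma dvars_piece: "dvars (piece A) = {x. \<exists>v\<in>A. lab v = Vr x}"
  unfolding dvars_def piece_def by simp

lemma is_drag_piece:
  assumes "finite A" "A \<subseteq> Vcut" "\<forall>v\<in>A. set (succs v) \<subseteq> A"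
  shows "is_drag ar (piece A)"
  unfolding is_drag_def
proof (intro conjI ballI allI impI)
  show "finite (dV (piece A))" "dS (piece A) \<subseteq> dV (piece A)"
    using assms(1) by (auto simp: piece_simps)
  fix v
  show "dR (piece A) v = 0" if "v \<notin> dV (piece A)" using that by (simp add: piece_simps)
  show "set (dX (piece A) v) \<subseteq> dV (piece A)" if "v \<in> dV (piece A)"
    using that assms(3) by (simp add: piece_simps)
  assume v: "v \<in> dS (piece A)"
  then have "v \<in> dS D \<union> Ports \<union> Relays" unfolding piece_simps cut_sprouts_def by blast
  then show "dX (piece A) v = []" "\<exists>x. dL (piece A) v = Vr x"
    using port_notin_dV relay_notin_dV D_sprout_shape D_sprouts_subset
    by (auto simp: piece_simps succs_not_internal lab_dV lab_port lab_relay)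
next
  fix v assume "v \<in> dV (piece A) - dS (piece A)"
  then have "v \<in> dV D - dS D" using assms(2) unfolding cut_sprouts_def piece_simps by blast
  then show "\<exists>f. dL (piece A) v = Fn f \<and> length (dX (piece A) v) = ar f"
    using D_internal_shape by (auto simp: piece_simps lab_dV length_succs)
qed

definition pieces_disjoint :: "'v set list \<Rightarrow> bool" where
  "pieces_disjoint As \<longleftrightarrow>
     (\<forall>A\<in>set As. \<forall>B\<in>set As. A \<noteq> B \<longrightarrow> A \<inter> B = {} \<and> dvars (piece A) \<inter> dvars (piece B) = {})"

lemma eval_sum_expr:
  "As \<noteq> [] \<Longrightarrow> \<forall>A\<in>set As. is_drag ar (piece A) \<Longrightarrow> distinct As \<Longrightarrow> pieces_disjoint As
   \<Longrightarrow> eval ar (sum_expr piece As) (piece (\<Union>(set As)))"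
proof (induction As rule: induct_list012)
  case 1 then show ?case by simp
next
  case (2 A) then show ?case by (simp add: eval_comp)
next
  case (3 A B As)
  let ?U = "\<Union>(set (B # As))"
  have IH: "eval ar (sum_expr piece (B # As)) (piece ?U)"
    using 3 unfolding pieces_disjoint_def by simp
  have "A \<inter> ?U = {}" using 3(5,6) unfolding pieces_disjoint_def by fastforce
  moreover have "dvars (piece A) \<inter> dvars (piece ?U) = {}"
  proof -
    have "dvars (piece A) \<inter> dvars (piece B') = {}" if "B' \<in> set (B # As)" for B'
      using 3(5,6) that unfolding pieces_disjoint_def by (metis distinct.simps(2) list.set_intros)
    then show ?thesis unfolding dvars_piece by blast
  qed
  ultimately have "disjoint_drags (piece A) (piece ?U)"
    unfolding disjoint_drags_def piece_simps by simp
  then have "eval ar (DSum (Comp (piece A)) (sum_expr piece (B # As))) (dsum (piece A) (piece ?U))"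
    using eval_sum[OF eval_comp IH] 3(4) by simp
  then show ?case using dsum_piece[OF \<open>A \<inter> ?U = {}\<close>] by (simp add: Un_assoc)
qed

subsection \<open>Wiring the cut edges back\<close>

definition retarget :: "('v \<times> nat) set \<Rightarrow> 'v \<Rightarrow> 'v" where
  "retarget F w = (if w \<in> port ` F then head (the_inv_into Slots port w) else w)"

text \<open>The cut drag after the two wires of every slot in F have been applied.\<close>
definition partly_wired :: "('v \<times> nat) set \<Rightarrow> ('v, 'f, 'x) drag" where
  "partly_wired F = \<lparr> dV = Vcut - port ` F - relay ` F,
     dR = \<lambda>v. if v \<in> port ` F \<union> relay ` F then 0 else roots v - card {e \<in> F. head e = v},
     dL = lab, dX = \<lambda>v. map (retarget F) (succs v), dS = cut_sprouts - port ` F - relay ` F \<rparr>"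

definition pending_wires :: "('v \<times> nat) set \<Rightarrow> ('v \<times> 'v) set" where
  "pending_wires F =
     (\<lambda>e. (port e, relay e)) ` (Slots - F) \<union> (\<lambda>e. (relay e, head e)) ` (Slots - F)"

lemma partly_wired_simps:
  "dV (partly_wired F) = Vcut - port ` F - relay ` F"
  "dS (partly_wired F) = cut_sprouts - port ` F - relay ` F"
  "dL (partly_wired F) = lab" "dX (partly_wired F) = (\<lambda>v. map (retarget F) (succs v))"
  "dR (partly_wired F) =
     (\<lambda>v. if v \<in> port ` F \<union> relay ` F then 0 else roots v - card {e \<in> F. head e = v})"
  unfolding partly_wired_def by simp_all

lemma retarget_port:
  assumes "F \<subseteq> Slots" "s \<in> Slots"
  shows "retarget F (port s) = (if s \<in> F then head s else port s)"
proof -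
  have "port s \<in> port ` F \<longleftrightarrow> s \<in> F" using assms port_eq_iff by blast
  then show ?thesis unfolding retarget_def using inj_port assms by (simp add: the_inv_into_f_f)
qed

lemma retarget_eq_port_iff:
  assumes "F \<subseteq> Slots" "w \<in> Ports" "e \<in> Slots - F"
  shows "retarget F w = port e \<longleftrightarrow> w = port e"
proof -
  obtain s where s: "s \<in> Slots" "w = port s" using assms(2) by blast
  then show ?thesis
    using retarget_port[OF assms(1) s(1)] head_in_dV[OF s(1)] port_notin_dV[of e]
      port_eq_iff[OF s(1)] assms(3) by auto
qed

lemma retarget_port_neq_relay:
  "F \<subseteq> Slots \<Longrightarrow> s \<in> Slots \<Longrightarrow> e \<in> Slots \<Longrightarrow> retarget F (port s) \<noteq> relay e"
  using retarget_port head_in_dV relay_notin_dV port_neq_relay by metis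

lemma cut_sprouts_subset: "cut_sprouts \<subseteq> Vcut"
  unfolding cut_sprouts_def using D_sprouts_subset by blast

lemma partly_wired_empty: "partly_wired {} = piece Vcut"
  unfolding partly_wired_def piece_def retarget_def
  using cut_sprouts_subset roots_outside by (auto intro!: ext)

lemma edges_map_succs:
  assumes "dV D - dS D \<subseteq> dV G" "\<And>v. v \<in> dV G \<Longrightarrow> dX G v = map g (succs v)"
  shows "edges G = (\<lambda>(a, k). (a, k, g (port (a, k)))) ` Slots"
proof (intro set_eqI iffI)
  fix x assume "x \<in> edges G"
  then obtain a k where x: "x = (a, k, g (succs a ! k))" "k < length (succs a)"
    unfolding edges_def using assms(2) by auto
  then show "x \<in> (\<lambda>(a, k). (a, k, g (port (a, k)))) ` Slots" using nth_succs[OF x(2)] by force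
next
  fix x assume "x \<in> (\<lambda>(a, k). (a, k, g (port (a, k)))) ` Slots"
  then obtain a k where x: "x = (a, k, g (port (a, k)))" "(a, k) \<in> Slots" by auto
  then have a: "a \<in> dV D - dS D" "a \<in> dV G" using slot_internal assms(1) by blast+
  have "k < length (succs a)" using x(2) length_succs[OF a(1)] slots_iff by simp
  then show "x \<in> edges G" unfolding edges_def using a x assms(2) nth_succs by auto
qed

lemma pred_map_succs:
  assumes "dV D - dS D \<subseteq> dV G" "\<And>v. v \<in> dV G \<Longrightarrow> dX G v = map g (succs v)"
  shows "pred w G = card {s \<in> Slots. g (port s) = w}"
proof -
  have "{x \<in> edges G. snd (snd x) = w}
        = (\<lambda>(a, k). (a, k, g (port (a, k)))) ` {s \<in> Slots. g (port s) = w}"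
    using edges_map_succs[OF assms] by force
  moreover have "inj_on (\<lambda>(a, k). (a, k, g (port (a, k)))) A" for A
    by (auto intro: inj_onI)
  ultimately show ?thesis unfolding pred_def by (simp add: card_image)
qed

lemma internal_in_partly_wired: "F \<subseteq> Slots \<Longrightarrow> dV D - dS D \<subseteq> dV (partly_wired F)"
  using fresh_vertices unfolding partly_wired_simps by blast

lemma pred_port_partly_wired:
  assumes "F \<subseteq> Slots" "e \<in> Slots - F"
  shows "pred (port e) (partly_wired F) = 1"
proof -
  have "{s \<in> Slots. retarget F (port s) = port e} = {e}"
    using retarget_eq_port_iff[OF assms(1) _ assms(2)] port_eq_iff assms(2) by blast
  moreover have "pred (port e) (partly_wired F) = card {s \<in> Slots. retarget F (port s) = port e}"
    by (rule pred_map_succs[OF internal_in_partly_wired[OF assms(1)]]) (simp add: partly_wired_simps)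
  ultimately show ?thesis by simp
qed

lemma pred_relay_after_port:
  assumes "F \<subseteq> Slots" "e \<in> Slots - F"
  shows "pred (relay e) (elem_wire (partly_wired F) (port e) (relay e)) = 1"
proof -
  let ?g = "\<lambda>w. if w = port e then relay e else retarget F w"
  have sub: "dV D - dS D \<subseteq> dV (elem_wire (partly_wired F) (port e) (relay e))"
    using internal_in_partly_wired[OF assms(1)] port_notin_dV[of e] assms(2)
    unfolding elem_wire_def by auto
  have dX: "dX (elem_wire (partly_wired F) (port e) (relay e)) v = map ?g (succs v)" for v
  proof -
    have "retarget F w = port e \<longleftrightarrow> w = port e" if "w \<in> set (succs v)" for w
      using that set_succs_subset retarget_eq_port_iff[OF assms(1) _ assms(2)] by blast
    then show ?thesis unfolding elem_wire_def partly_wired_simps by simp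
  qed
  have "?g (port s) = relay e \<longleftrightarrow> s = e" if "s \<in> Slots" for s
    using retarget_port_neq_relay[OF assms(1) that, of e] port_eq_iff[OF that, of e] assms(2)
    by auto
  then have "{s \<in> Slots. ?g (port s) = relay e} = {e}" using assms(2) by blast
  moreover have "pred (relay e) (elem_wire (partly_wired F) (port e) (relay e))
                 = card {s \<in> Slots. ?g (port s) = relay e}"
    by (rule pred_map_succs) (use sub dX in auto)
  ultimately show ?thesis by simp
qed

lemma card_head_insert:
  assumes "F \<subseteq> Slots" "e \<in> Slots - F"
  shows "card {s \<in> insert e F. head s = v}
         = (if head e = v then Suc (card {s \<in> F. head s = v}) else card {s \<in> F. head s = v})"
proof -
  have fin: "finite {s \<in> F. head s = v}" using finite_slots assms(1) by (auto intro: finite_subset)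
  show ?thesis
  proof (cases "head e = v")
    case True
    then have "{s \<in> insert e F. head s = v} = insert e {s \<in> F. head s = v}" by auto
    then show ?thesis using True fin assms(2) by simp
  next
    case False
    then have "{s \<in> insert e F. head s = v} = {s \<in> F. head s = v}" by auto
    then show ?thesis using False by simp
  qed
qed

lemma retarget_insert:
  assumes "F \<subseteq> Slots" "e \<in> Slots - F" "w \<in> Ports"
  shows "(\<lambda>w. if w = relay e then head e else w) ((\<lambda>w. if w = port e then relay e else w) (retarget F w))
         = retarget (insert e F) w"
proof -
  obtain s where s: "s \<in> Slots" "w = port s" using assms(3) by blast
  have e: "e \<in> Slots" "insert e F \<subseteq> Slots" using assms(1,2) by blast+
  then show ?thesis
    using retarget_port[OF assms(1) s(1)] retarget_port[OF e(2) s(1)] assms(2) s(2)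
      head_in_dV[OF s(1)] head_in_dV[OF e(1)] port_notin_dV[OF e(1)] relay_notin_dV[OF e(1)]
      port_eq_iff[OF s(1) e(1)] port_neq_relay[OF s(1) e(1)] port_neq_relay[OF e(1) e(1)]
    by auto
qed

lemma wire_slot:
  assumes F: "F \<subseteq> Slots" and e: "e \<in> Slots - F"
  shows "elem_wire (elem_wire (partly_wired F) (port e) (relay e)) (relay e) (head e)
         = partly_wired (insert e F)" (is "?G = _")
proof (rule drag.equality)
  have fresh: "port e \<notin> dV D" "relay e \<notin> dV D" "port e \<noteq> relay e" "head e \<in> dV D"
    using port_notin_dV relay_notin_dV port_neq_relay head_in_dV e by auto
  show "dV ?G = dV (partly_wired (insert e F))" "dS ?G = dS (partly_wired (insert e F))"
    "dL ?G = dL (partly_wired (insert e F))"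
    "drag.more ?G = drag.more (partly_wired (insert e F))"
    unfolding elem_wire_def partly_wired_def by auto
  have "map (\<lambda>w. if w = relay e then head e else w)
          (map (\<lambda>w. if w = port e then relay e else w) (map (retarget F) (succs v)))
        = map (retarget (insert e F)) (succs v)" for v
    unfolding map_map
  proof (rule map_cong[OF refl])
    fix w assume "w \<in> set (succs v)"
    then have "w \<in> Ports" using set_succs_subset by blast
    then show "((\<lambda>w. if w = relay e then head e else w) \<circ>
                ((\<lambda>w. if w = port e then relay e else w) \<circ> retarget F)) w
               = retarget (insert e F) w"
      using retarget_insert[OF F e] by (simp only: comp_apply)
  qed
  then show "dX ?G = dX (partly_wired (insert e F))"
    unfolding elem_wire_def partly_wired_simps by auto
  show "dR ?G = dR (partly_wired (insert e F))"
  proof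
    fix v
    have "dR ?G v = (if v = relay e then 0 else if v = head e then dR (partly_wired F) (head e) - 1
                     else if v = port e then 0 else dR (partly_wired F) v)"
      unfolding elem_wire_def[of "elem_wire (partly_wired F) (port e) (relay e)"]
        pred_relay_after_port[OF F e]
      unfolding elem_wire_def pred_port_partly_wired[OF F e] using fresh by auto
    moreover have "head e \<notin> port ` F \<union> relay ` F" using fresh fresh_vertices F by blast
    ultimately show "dR ?G v = dR (partly_wired (insert e F)) v"
      unfolding partly_wired_simps card_head_insert[OF F e] using fresh by auto
  qed
qed

lemma Range_pending_wires: "Range (pending_wires F) \<subseteq> Relays \<union> dV D"
  unfolding pending_wires_def using head_in_dV by auto

lemma pending_wiresE:
  assumes "(s, r) \<in> pending_wires F"
  obtains e where "e \<in> Slots - F" "s = port e" "r = relay e"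
    | e where "e \<in> Slots - F" "s = relay e" "r = head e"
  using assms unfolding pending_wires_def by blast

lemma pending_wire_into_relay:
  assumes "e \<in> Slots" "(t, relay e) \<in> pending_wires F"
  shows "t = port e"
  using assms(2)
proof (cases rule: pending_wiresE)
  case (1 e')
  then show ?thesis using relay_eq_iff[of e e'] assms(1) by blast
next
  case (2 e')
  then show ?thesis using head_in_dV[of e'] relay_notin_dV[OF assms(1)] by auto
qed

lemma pending_wires_remove_slot:
  assumes "e \<in> Slots - F"
  shows "pending_wires F - {(port e, relay e)} - {(relay e, head e)} = pending_wires (insert e F)"
proof -
  have "Slots - F = insert e (Slots - insert e F)" using assms by blast
  then have "pending_wires F = {(port e, relay e), (relay e, head e)} \<union> pending_wires (insert e F)"
    unfolding pending_wires_def by auto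
  moreover have "(port e, relay e) \<notin> pending_wires (insert e F)"
  proof
    assume "(port e, relay e) \<in> pending_wires (insert e F)"
    then show False
    proof (cases rule: pending_wiresE)
      case (1 e')
      then show False using port_eq_iff[of e e'] assms by blast
    next
      case (2 e')
      then show False using port_neq_relay[of e e'] assms by blast
    qed
  qed
  moreover have "(relay e, head e) \<notin> pending_wires (insert e F)"
  proof
    assume "(relay e, head e) \<in> pending_wires (insert e F)"
    then show False
    proof (cases rule: pending_wiresE)
      case (1 e')
      then show False using port_neq_relay[of e' e] assms by auto
    next
      case (2 e')
      then show False using relay_eq_iff[of e e'] assms by blast
    qed
  qed
  ultimately show ?thesis by blast
qed

text \<open>A port wire is never preceded by another wire, and once it is applied the relay wire of the
  same slot is not either; so the slots can be wired one at a time.\<close>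
lemma wiring_partly_wired:
  "F \<subseteq> Slots \<Longrightarrow> wiring (partly_wired F) (pending_wires F) (partly_wired Slots)"
proof (induction "card (Slots - F)" arbitrary: F)
  case 0
  then have "F = Slots" using finite_slots by auto
  then show ?case using wiring_empty by (simp add: pending_wires_def)
next
  case (Suc n)
  have "Slots - F \<noteq> {}" using Suc(2) by force
  then obtain e where e: "e \<in> Slots - F" by blast
  have "Slots - insert e F = (Slots - F) - {e}" by blast
  then have "n = card (Slots - insert e F)"
    using Suc(2) card_Diff_singleton[OF e] by simp
  moreover have "insert e F \<subseteq> Slots" using Suc(3) e by blast
  ultimately have IH:
    "wiring (partly_wired (insert e F)) (pending_wires (insert e F)) (partly_wired Slots)"
    by (rule Suc(1))
  have "port e \<noteq> relay e" using port_neq_relay e by blast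
  moreover have port_wire: "(port e, relay e) \<in> pending_wires F"
    and "(relay e, head e) \<in> pending_wires F"
    using e unfolding pending_wires_def by blast+
  ultimately have relay_wire: "(relay e, head e) \<in> pending_wires F - {(port e, relay e)}"
    by simp
  have "port e \<notin> Range (pending_wires F)"
    using Range_pending_wires[of F] port_notin_dV[of e] port_neq_relay[of e] e by blast
  then have port_first: "\<not> (\<exists>t. (t, port e) \<in> (pending_wires F)\<^sup>+)"
    using trancl_range[of "pending_wires F"] by blast
  have "relay e \<notin> Range (pending_wires F - {(port e, relay e)})"
    using pending_wire_into_relay e by blast
  then have relay_next: "\<not> (\<exists>t. (t, relay e) \<in> (pending_wires F - {(port e, relay e)})\<^sup>+)"
    using trancl_range[of "pending_wires F - {(port e, relay e)}"] by blast
  show ?case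
  proof (rule wiring_step[OF port_wire port_first], rule wiring_step[OF relay_wire relay_next])
    show "wiring (elem_wire (elem_wire (partly_wired F) (port e) (relay e)) (relay e) (head e))
            (pending_wires F - {(port e, relay e)} - {(relay e, head e)}) (partly_wired Slots)"
      using IH unfolding wire_slot[OF Suc(3) e] pending_wires_remove_slot[OF e] .
  qed
qed

lemma same_drag_partly_wired_all: "same_drag (partly_wired Slots) D"
  unfolding same_drag_def partly_wired_simps
proof (intro conjI allI ballI)
  show "Vcut - Ports - Relays = dV D" using fresh_vertices by blast
  show "cut_sprouts - Ports - Relays = dS D"
    using fresh_vertices D_sprouts_subset unfolding cut_sprouts_def by blast
  fix v
  have "v \<notin> dV D \<Longrightarrow> {e \<in> Slots. head e = v} = {}" using head_in_dV by blast
  then show "(if v \<in> Ports \<union> Relays then 0 else roots v - card {e \<in> Slots. head e = v}) = dR D v"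
    using fresh_vertices D_roots_outside unfolding roots_def by auto
next
  fix v assume "v \<in> Vcut - Ports - Relays"
  then have v: "v \<in> dV D" using fresh_vertices by blast
  then show "lab v = dL D v" by (rule lab_dV)
  show "map (retarget Slots) (succs v) = dX D v"
  proof (cases "v \<in> dS D")
    case True then show ?thesis using D_sprout_shape succs_not_internal by simp
  next
    case False
    have "retarget Slots (port (v, k)) = dX D v ! k" if "k < length (dX D v)" for k
      using that v retarget_port[OF order_refl, of "(v, k)"] by (simp add: slots_iff head_def)
    then show ?thesis using v False by (auto simp: succs_def intro!: nth_equalityI)
  qed
qed

subsection \<open>The switchboard\<close>

lemma pending_wires_all:
  "pending_wires {} = (\<lambda>e. (port e, relay e)) ` Slots \<union> (\<lambda>e. (relay e, head e)) ` Slots"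
  unfolding pending_wires_def by simp

lemma Domain_pending_wires_all: "Domain (pending_wires {}) = Ports \<union> Relays"
  unfolding pending_wires_all by auto

lemma trancl_pending_wires_all:
  assumes "(a, c) \<in> (pending_wires {})\<^sup>+"
  shows "(a, c) \<in> pending_wires {} \<union> (\<lambda>e. (port e, head e)) ` Slots"
  using assms
proof (induction rule: trancl_induct)
  case (base c) then show ?case by blast
next
  case (step b c)
  obtain e' where e': "e' \<in> Slots" "b = port e' \<and> c = relay e' \<or> b = relay e' \<and> c = head e'"
    using step.hyps(2) unfolding pending_wires_all by blast
  obtain e where e: "e \<in> Slots"
    "a = port e \<and> b = relay e \<or> a = relay e \<and> b = head e \<or> a = port e \<and> b = head e"
    using step.IH unfolding pending_wires_all by blast
  have "port e' \<noteq> relay e" "port e' \<noteq> head e" "relay e' \<noteq> head e"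
    using port_neq_relay[OF e'(1) e(1)] port_notin_dV[OF e'(1)] relay_notin_dV[OF e'(1)]
      head_in_dV[OF e(1)] by auto
  then have "a = port e \<and> b = relay e \<and> b = relay e' \<and> c = head e'"
    using e(2) e'(2) by auto
  then have "a = port e \<and> c = head e" using relay_eq_iff[OF e(1) e'(1)] by auto
  then show ?case using e(1) by blast
qed

lemma retarget_empty: "retarget {} w = w"
  unfolding retarget_def by simp

lemma pred_cut: "pred w (piece Vcut) = (if w \<in> Ports then 1 else 0)"
proof -
  have "pred w (partly_wired {}) = card {s \<in> Slots. retarget {} (port s) = w}"
    by (rule pred_map_succs[OF internal_in_partly_wired]) (simp_all add: partly_wired_simps)
  moreover have "{s \<in> Slots. port s = w} = (if w \<in> Ports then {the_inv_into Slots port w} else {})"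
    using port_eq_iff by (auto simp: the_inv_into_f_f[OF inj_port])
  ultimately show ?thesis by (simp add: partly_wired_empty retarget_empty)
qed

lemma incoming_le_roots:
  "card {e \<in> Slots. head e = r} + card {e \<in> Slots. relay e = r} \<le> dR (piece Vcut) r"
proof (cases "r \<in> dV D")
  case True
  then have "{e \<in> Slots. relay e = r} = {}" using relay_notin_dV by blast
  then have "card {e \<in> Slots. relay e = r} = 0" by (metis card.empty)
  then show ?thesis using True by (simp add: piece_simps roots_def)
next
  case False
  then have "{e \<in> Slots. head e = r} = {}" using head_in_dV by blast
  then have no_heads: "card {e \<in> Slots. head e = r} = 0" by (metis card.empty)
  have "card {e \<in> Slots. relay e = r} \<le> dR (piece Vcut) r"
  proof (cases "{e \<in> Slots. relay e = r} = {}")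
    case True then show ?thesis by (metis card.empty zero_le)
  next
    case False
    then have "dR (piece Vcut) r = 1" using \<open>r \<notin> dV D\<close> by (auto simp: piece_simps roots_def)
    moreover have "card {e \<in> Slots. relay e = r} \<le> 1"
      using card_le_Suc0_iff_eq[of "{e \<in> Slots. relay e = r}"] finite_slots relay_eq_iff by auto
    ultimately show ?thesis by simp
  qed
  then show ?thesis using no_heads by simp
qed

lemma sum_pred_le_roots:
  "(\<Sum>s\<in>{s. (s, r) \<in> (pending_wires {})\<^sup>+}. pred s (piece Vcut)) \<le> dR (piece Vcut) r"
proof -
  let ?T = "{s. (s, r) \<in> (pending_wires {})\<^sup>+}"
  let ?A = "{e \<in> Slots. head e = r}" and ?B = "{e \<in> Slots. relay e = r}"
  have T: "?T \<subseteq> port ` ?A \<union> relay ` ?A \<union> port ` ?B"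
    using trancl_pending_wires_all unfolding pending_wires_all by blast
  have fin: "finite ?A" "finite ?B" using finite_slots by simp_all
  then have "finite ?T" using T by (meson finite_Un finite_imageI finite_subset)
  then have "(\<Sum>s\<in>?T. pred s (piece Vcut)) = (\<Sum>s\<in>?T \<inter> Ports. 1)"
    unfolding pred_cut by (rule sum.inter_restrict[symmetric])
  also have "\<dots> = card (?T \<inter> Ports)" by simp
  also have "\<dots> \<le> card (port ` (?A \<union> ?B))"
  proof (rule card_mono)
    show "finite (port ` (?A \<union> ?B))" using fin by blast
    show "?T \<inter> Ports \<subseteq> port ` (?A \<union> ?B)" using T ports_relays_disjoint by blast
  qed
  also have "\<dots> \<le> card (?A \<union> ?B)" using fin by (intro card_image_le) blast
  also have "\<dots> \<le> card ?A + card ?B" by (rule card_Un_le)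
  also have "\<dots> \<le> dR (piece Vcut) r" by (rule incoming_le_roots)
  finally show ?thesis .
qed

lemma pending_wires_all_functional:
  assumes "(s, r) \<in> pending_wires {}" "(s, r') \<in> pending_wires {}"
  shows "r = r'"
  using assms(1)
proof (cases rule: pending_wiresE)
  case (1 e)
  from assms(2) show ?thesis
  proof (cases rule: pending_wiresE)
    case (1 e')
    then show ?thesis
      using \<open>s = port e\<close> \<open>r = relay e\<close> \<open>e \<in> Slots - {}\<close> port_eq_iff[of e e'] by auto
  next
    case (2 e') then show ?thesis using \<open>s = port e\<close> \<open>e \<in> Slots - {}\<close> port_neq_relay[of e e'] by auto
  qed
next
  case (2 e)
  from assms(2) show ?thesis
  proof (cases rule: pending_wiresE)
    case (1 e') then show ?thesis using \<open>s = relay e\<close> \<open>e \<in> Slots - {}\<close> port_neq_relay[of e' e] by auto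
  next
    case (2 e')
    then show ?thesis
      using \<open>s = relay e\<close> \<open>r = head e\<close> \<open>e \<in> Slots - {}\<close> relay_eq_iff[of e e'] by auto
  qed
qed

lemma trancl_pending_wires_all_irrefl: "(x, x) \<notin> (pending_wires {})\<^sup>+"
proof
  assume "(x, x) \<in> (pending_wires {})\<^sup>+"
  then consider "(x, x) \<in> pending_wires {}" | e where "e \<in> Slots" "x = port e" "x = head e"
    using trancl_pending_wires_all by blast
  then show False
  proof cases
    case 1
    then show False
    proof (cases rule: pending_wiresE)
      case (1 e) then show False using port_neq_relay[of e e] by simp
    next
      case (2 e) then show False using head_in_dV[of e] relay_notin_dV[of e] by simp
    qed
  next
    case (2 e) then show False using head_in_dV[of e] port_notin_dV[of e] by simp
  qed
qed

lemma well_behaved_pending_wires_all: "well_behaved (piece Vcut) (pending_wires {})"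
  unfolding well_behaved_def
proof (intro conjI allI impI)
  show "is_wires (piece Vcut) (pending_wires {})"
    unfolding is_wires_def
  proof clarify
    fix s r assume "(s, r) \<in> pending_wires {}"
    then show "s \<in> dS (piece Vcut) \<and> r \<in> dV (piece Vcut) \<and> r \<noteq> s"
    proof (cases rule: pending_wiresE)
      case (1 e)
      then show ?thesis using port_neq_relay[of e e] by (auto simp: piece_simps cut_sprouts_def)
    next
      case (2 e)
      then show ?thesis
        using head_in_dV[of e] relay_notin_dV[of e] by (auto simp: piece_simps cut_sprouts_def)
    qed
  qed
  show "finite (pending_wires {})" unfolding pending_wires_all using finite_slots by simp
  show "r = r'" if "(s, r) \<in> pending_wires {}" "(s, r') \<in> pending_wires {}" for s r r'
    using that by (rule pending_wires_all_functional)
  show "(\<Sum>s\<in>{s. (s, r) \<in> (pending_wires {})\<^sup>+}. pred s (piece Vcut)) \<le> dR (piece Vcut) r" for r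
    by (rule sum_pred_le_roots)
  have "acyclic ((pending_wires {})\<^sup>+)"
    unfolding acyclic_def using trancl_pending_wires_all_irrefl by simp
  then show "acyclic ((pending_wires {})\<^sup>+ \<inter> (dS (piece Vcut) \<times> dS (piece Vcut)))"
    by (rule acyclic_subset) blast
qed

text \<open>All origins carry distinct fresh variables, so coherence holds trivially.\<close>
lemma coherent_pending_wires_all: "coherent (piece Vcut) (pending_wires {}) DW"
  unfolding coherent_def
proof (intro conjI allI impI ballI)
  fix x s assume "\<exists>s\<in>Domain (pending_wires {}). dL (piece Vcut) s = Vr x"
    and s: "s \<in> dS (piece Vcut)" "dL (piece Vcut) s = Vr x"
  then obtain s0 where s0: "s0 \<in> Ports \<union> Relays" "lab s0 = Vr x"
    unfolding Domain_pending_wires_all piece_simps by blast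
  have "s0 \<notin> dS D" using s0(1) D_sprouts_subset fresh_vertices by blast
  moreover have "s0 \<in> Vcut" "s \<in> Vcut" "lab s = Vr x" using s0(1) s unfolding piece_simps by auto
  ultimately have "s = s0" using same_var_lab[of s0 s x] s0(2) by blast
  then show "s \<in> Domain (pending_wires {})" using s0(1) Domain_pending_wires_all by blast
next
  fix s r s' r' assume w: "(s, r) \<in> pending_wires {}" "(s', r') \<in> pending_wires {}"
    and "dL (piece Vcut) s = dL (piece Vcut) s'"
  then have "lab s = lab s'" "s \<in> Ports \<union> Relays" "s' \<in> Ports \<union> Relays"
    using Domain_pending_wires_all unfolding piece_simps by blast+
  then have "s = s'" by (rule inj_onD[OF lab_fresh_inj])
  then have "r = r'" using w pending_wires_all_functional by blast
  then show "equimorphic (subdrag DW (wire_image (pending_wires {}) r))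
                         (subdrag DW (wire_image (pending_wires {}) r'))"
    by (simp add: equimorphic_refl)
qed

subsection \<open>The atomic pieces\<close>

definition vertex_block :: "'v \<Rightarrow> 'v set" where
  "vertex_block u = insert u (set (succs u))"

definition sprout_block :: "'x \<Rightarrow> 'v set" where
  "sprout_block x = {t \<in> dS D. dL D t = Vr x}"

definition left_blocks :: "'v set set" where
  "left_blocks = vertex_block ` (dV D - dS D) \<union> sprout_block ` {x. \<exists>t\<in>dS D. dL D t = Vr x}"

definition right_blocks :: "'v set set" where
  "right_blocks = (\<lambda>e. {relay e}) ` Slots"

text \<open>The blocks are fibres of this map, hence pairwise disjoint.\<close>
definition block_of :: "'v \<Rightarrow> 'v set" where
  "block_of v = (if v \<in> dS D then sprout_block (THE x. dL D v = Vr x)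
                 else if v \<in> dV D then vertex_block v
                 else if v \<in> Ports then vertex_block (fst (the_inv_into Slots port v))
                 else {v})"

lemma set_succs: "u \<in> dV D - dS D \<Longrightarrow> set (succs u) = (\<lambda>k. port (u, k)) ` {..<length (dX D u)}"
  unfolding succs_def by auto

lemma block_of_sprout: "v \<in> dS D \<Longrightarrow> dL D v = Vr x \<Longrightarrow> block_of v = sprout_block x"
  unfolding block_of_def by simp

lemma block_of_port: "(u, k) \<in> Slots \<Longrightarrow> block_of (port (u, k)) = vertex_block u"
  using port_notin_dV D_sprouts_subset inj_port unfolding block_of_def
  by (auto simp: the_inv_into_f_f)

lemma block_of_mem:
  assumes "A \<in> left_blocks \<union> right_blocks" "v \<in> A"
  shows "block_of v = A"
  using assms unfolding left_blocks_def right_blocks_def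
proof (elim UnE imageE)
  fix u assume u: "A = vertex_block u" "u \<in> dV D - dS D"
  then consider "v = u" | k where "k < length (dX D u)" "v = port (u, k)"
    using assms(2) set_succs unfolding vertex_block_def by auto
  then show ?thesis
  proof cases
    case 1 then show ?thesis using u unfolding block_of_def by simp
  next
    case 2 then show ?thesis using u block_of_port slots_iff by simp
  qed
next
  fix x assume "A = sprout_block x"
  then show ?thesis using assms(2) block_of_sprout unfolding sprout_block_def by blast
next
  fix e assume e: "A = {relay e}" "e \<in> Slots"
  then have "v = relay e" "relay e \<notin> dV D" "relay e \<notin> Ports"
    using assms(2) relay_notin_dV ports_relays_disjoint by auto
  then show ?thesis using e D_sprouts_subset unfolding block_of_def by auto
qed

lemma vertex_block_subset: "u \<in> dV D - dS D \<Longrightarrow> vertex_block u \<subseteq> dV D \<union> Ports"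
  unfolding vertex_block_def using set_succs_subset by blast

lemma Union_left_blocks: "\<Union>left_blocks = dV D \<union> Ports"
proof
  show "\<Union>left_blocks \<subseteq> dV D \<union> Ports"
    using vertex_block_subset D_sprouts_subset
    unfolding left_blocks_def sprout_block_def by blast
  show "dV D \<union> Ports \<subseteq> \<Union>left_blocks"
  proof
    fix v assume "v \<in> dV D \<union> Ports"
    then consider "v \<in> dV D - dS D" | "v \<in> dS D" | a k where "(a, k) \<in> Slots" "v = port (a, k)"
      by auto
    then show "v \<in> \<Union>left_blocks"
    proof cases
      case 1 then show ?thesis unfolding left_blocks_def vertex_block_def by blast
    next
      case 2
      then obtain x where "dL D v = Vr x" using D_sprout_shape by blast
      then show ?thesis using 2 unfolding left_blocks_def sprout_block_def by blast
    next
      case 3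
      then have "v \<in> vertex_block a" "a \<in> dV D - dS D"
        using slot_internal set_succs slots_iff unfolding vertex_block_def by auto
      then show ?thesis unfolding left_blocks_def by blast
    qed
  qed
qed

lemma Union_right_blocks: "\<Union>right_blocks = Relays"
  unfolding right_blocks_def by auto

lemma block_subset_Vcut: "A \<in> left_blocks \<union> right_blocks \<Longrightarrow> A \<subseteq> Vcut"
  using Union_left_blocks Union_right_blocks by blast

lemma left_right_blocks_disjoint: "left_blocks \<inter> right_blocks = {}"
proof -
  have "{relay e} \<notin> left_blocks" if "e \<in> Slots" for e
    using that Union_left_blocks relay_notin_dV ports_relays_disjoint by blast
  then show ?thesis unfolding right_blocks_def by blast
qed

lemma finite_left_blocks: "finite left_blocks"
proof -
  have "{x. \<exists>t\<in>dS D. dL D t = Vr x} \<subseteq> (\<lambda>t. case dL D t of Vr x \<Rightarrow> x) ` dS D" by force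
  then show ?thesis
    unfolding left_blocks_def using D_finite D_sprouts_subset by (meson finite_Diff finite_Un
        finite_imageI finite_subset)
qed

lemma finite_right_blocks: "finite right_blocks"
  unfolding right_blocks_def using finite_slots by simp

lemma blocks_disjoint:
  assumes "A \<in> left_blocks \<union> right_blocks" "B \<in> left_blocks \<union> right_blocks" "A \<noteq> B"
  shows "A \<inter> B = {}" "dvars (piece A) \<inter> dvars (piece B) = {}"
proof -
  show "A \<inter> B = {}"
  proof (rule ccontr)
    assume "A \<inter> B \<noteq> {}"
    then obtain v where "v \<in> A" "v \<in> B" by blast
    then show False using block_of_mem[OF assms(1)] block_of_mem[OF assms(2)] assms(3) by metis
  qed
  show "dvars (piece A) \<inter> dvars (piece B) = {}"
  proof (rule ccontr)
    assume "dvars (piece A) \<inter> dvars (piece B) \<noteq> {}"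
    then obtain x v w where v: "v \<in> A" "lab v = Vr x" and w: "w \<in> B" "lab w = Vr x"
      unfolding dvars_piece by blast
    moreover have "v \<in> Vcut" "w \<in> Vcut"
      using block_subset_Vcut assms(1,2) v(1) w(1) by blast+
    ultimately have "v = w \<or> v \<in> dS D \<and> w \<in> dS D" using same_var_lab by blast
    moreover have "block_of v = block_of w" if "v \<in> dS D" "w \<in> dS D"
    proof -
      have "dL D v = Vr x" "dL D w = Vr x" using that v(2) w(2) lab_dV D_sprouts_subset by auto
      then show ?thesis using block_of_sprout that by simp
    qed
    ultimately have "block_of v = block_of w" by blast
    then show False
      using block_of_mem[OF assms(1) v(1)] block_of_mem[OF assms(2) w(1)] assms(3) by simp
  qed
qed

lemma is_drag_block: "A \<in> left_blocks \<union> right_blocks \<Longrightarrow> is_drag ar (piece A)"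
proof (rule is_drag_piece)
  assume A: "A \<in> left_blocks \<union> right_blocks"
  then show "A \<subseteq> Vcut" by (rule block_subset_Vcut)
  moreover have "finite Vcut" using D_finite finite_slots by simp
  ultimately show "finite A" by (rule finite_subset)
  show "\<forall>v\<in>A. set (succs v) \<subseteq> A"
  proof
    fix v assume "v \<in> A"
    show "set (succs v) \<subseteq> A"
    proof (cases "v \<in> dV D - dS D")
      case True
      then have "A = vertex_block v" using block_of_mem[OF A \<open>v \<in> A\<close>] by (simp add: block_of_def)
      then show ?thesis unfolding vertex_block_def by blast
    qed (simp add: succs_not_internal)
  qed
qed

lemma atomic_vertex_block:
  assumes "u \<in> dV D - dS D"
  shows "atomic_vertex ar (piece (vertex_block u))"
  unfolding atomic_vertex_def
proof (intro conjI exI[of _ u])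
  have ports: "set (succs u) \<subseteq> Ports" "u \<notin> cut_sprouts"
    using set_succs_subset assms fresh_vertices unfolding cut_sprouts_def by blast+
  have slots: "(u, k) \<in> Slots" if "k < length (dX D u)" for k
    using assms that slots_iff by blast
  show "is_drag ar (piece (vertex_block u))"
    using assms is_drag_block unfolding left_blocks_def by blast
  show "dV (piece (vertex_block u)) - dS (piece (vertex_block u)) = {u}"
    "dS (piece (vertex_block u)) = set (dX (piece (vertex_block u)) u)"
    using ports unfolding piece_simps vertex_block_def cut_sprouts_def by auto
  have "inj_on (\<lambda>k. port (u, k)) {..<length (dX D u)}"
    using slots inj_onD[OF inj_port] by (auto intro!: inj_onI)
  then show "distinct (dX (piece (vertex_block u)) u)"
    using assms by (simp add: piece_simps succs_def distinct_map lessThan_atLeast0)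
  show "inj_on (dL (piece (vertex_block u))) (set (dX (piece (vertex_block u)) u))"
    using inj_on_subset[OF lab_fresh_inj] ports(1) unfolding piece_simps by blast
qed

lemma atomic_block: "A \<in> left_blocks \<union> right_blocks \<Longrightarrow> atomic_drag ar (piece A)"
  unfolding atomic_drag_def
proof (elim UnE)
  assume A: "A \<in> left_blocks"
  then consider u where "A = vertex_block u" "u \<in> dV D - dS D"
    | x t where "A = sprout_block x" "t \<in> dS D" "dL D t = Vr x"
    unfolding left_blocks_def by blast
  then show "atomic_vertex ar (piece A) \<or> atomic_sprouts ar (piece A)"
  proof cases
    case 1 then show ?thesis using atomic_vertex_block by blast
  next
    case (2 x t)
    have "atomic_sprouts ar (piece A)"
      unfolding atomic_sprouts_def
    proof (intro conjI exI[of _ x] ballI)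
      show "is_drag ar (piece A)" using is_drag_block A by blast
      show "dS (piece A) = dV (piece A)" "dV (piece A) \<noteq> {}"
        using 2 D_sprouts_subset by (auto simp: piece_simps sprout_block_def cut_sprouts_def)
    next
      fix s assume "s \<in> dS (piece A)"
      then show "dL (piece A) s = Vr x"
        using 2 D_sprouts_subset by (auto simp: piece_simps sprout_block_def lab_dV)
    qed
    then show ?thesis by blast
  qed
next
  assume A: "A \<in> right_blocks"
  then obtain e where e: "A = {relay e}" "e \<in> Slots" unfolding right_blocks_def by blast
  have "atomic_sprouts ar (piece A)"
    unfolding atomic_sprouts_def
    using is_drag_block A e by (auto simp: piece_simps cut_sprouts_def lab_relay)
  then show "atomic_vertex ar (piece A) \<or> atomic_sprouts ar (piece A)" by blast
qed

subsection \<open>The decomposition\<close>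

lemma eval_sum_blocks:
  assumes "L \<noteq> []" "distinct L" "set L \<subseteq> left_blocks \<union> right_blocks"
  shows "eval ar (sum_expr piece L) (piece (\<Union>(set L)))"
proof -
  have "\<forall>A\<in>set L. is_drag ar (piece A)" using assms(3) is_drag_block by blast
  moreover have "pieces_disjoint L"
    unfolding pieces_disjoint_def using assms(3) blocks_disjoint by blast
  ultimately show ?thesis using eval_sum_expr assms(1,2) by blast
qed

lemma atomic_expression_of_blocks:
  assumes "components E = map piece L" "distinct L" "set L \<subseteq> left_blocks \<union> right_blocks"
  shows "drag_expression E \<and> (\<forall>C\<in>set (components E). atomic_drag ar C)"
proof
  show "drag_expression E"
    unfolding drag_expression_def Let_def assms(1)
  proof (intro allI impI)
    fix i j assume ij: "i < length (map piece L)" "j < length (map piece L)" "i \<noteq> j"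
    then have "L ! i \<noteq> L ! j" using assms(2) nth_eq_iff_index_eq by auto
    moreover have "L ! i \<in> left_blocks \<union> right_blocks" "L ! j \<in> left_blocks \<union> right_blocks"
      using ij assms(3) nth_mem by auto
    ultimately show "disjoint_drags (map piece L ! i) (map piece L ! j)"
      using blocks_disjoint ij unfolding disjoint_drags_def by (simp add: piece_simps)
  qed
  show "\<forall>C\<in>set (components E). atomic_drag ar C" using assms(1,3) atomic_block by auto
qed

lemma disjoint_drags_cut: "disjoint_drags (piece (dV D \<union> Ports)) (piece Relays)"
  unfolding disjoint_drags_def piece_simps
proof
  show disj: "(dV D \<union> Ports) \<inter> Relays = {}" using fresh_vertices ports_relays_disjoint by blast
  show "dvars (piece (dV D \<union> Ports)) \<inter> dvars (piece Relays) = {}"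
  proof (rule ccontr)
    assume "dvars (piece (dV D \<union> Ports)) \<inter> dvars (piece Relays) \<noteq> {}"
    then obtain x v w where "v \<in> dV D \<union> Ports" "lab v = Vr x" "w \<in> Relays" "lab w = Vr x"
      unfolding dvars_piece by blast
    then show False using same_var_lab[of v w x] disj fresh_vertices D_sprouts_subset by blast
  qed
qed

lemma dsum_left_right: "dsum (piece (dV D \<union> Ports)) (piece Relays) = piece Vcut"
  using fresh_vertices ports_relays_disjoint by (intro dsum_piece) blast

lemma switchboard_cut:
  "switchboard (piece (dV D \<union> Ports)) (piece Relays)
     ((\<lambda>e. (port e, relay e)) ` Slots) ((\<lambda>e. (relay e, head e)) ` Slots)"
  unfolding switchboard_def pending_wires_all[symmetric]
proof (intro conjI)
  show "\<forall>(s, r)\<in>(\<lambda>e. (port e, relay e)) ` Slots.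
          s \<in> dS (piece (dV D \<union> Ports)) \<and> r \<in> dV (piece Relays) \<and> 0 < dR (piece Relays) r"
    using relay_notin_dV by (auto simp: piece_simps cut_sprouts_def roots_def)
  show "\<forall>(s, r)\<in>(\<lambda>e. (relay e, head e)) ` Slots.
          s \<in> dS (piece Relays) \<and> r \<in> dV (piece (dV D \<union> Ports)) \<and> 0 < dR (piece (dV D \<union> Ports)) r"
  proof clarify
    fix e assume e: "e \<in> Slots"
    have "e \<in> {e' \<in> Slots. head e' = head e}" using e by blast
    then have "card {e' \<in> Slots. head e' = head e} > 0"
      using finite_slots card_gt_0_iff by fastforce
    then show "relay e \<in> dS (piece Relays) \<and> head e \<in> dV (piece (dV D \<union> Ports))
               \<and> 0 < dR (piece (dV D \<union> Ports)) (head e)"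
      using head_in_dV[OF e] e by (auto simp: piece_simps cut_sprouts_def roots_def)
  qed
  show "\<forall>s r r'. (s, r) \<in> (\<lambda>e. (port e, relay e)) ` Slots \<longrightarrow>
          (s, r') \<in> (\<lambda>e. (port e, relay e)) ` Slots \<longrightarrow> r = r'"
    using port_eq_iff by auto
  show "\<forall>s r r'. (s, r) \<in> (\<lambda>e. (relay e, head e)) ` Slots \<longrightarrow>
          (s, r') \<in> (\<lambda>e. (relay e, head e)) ` Slots \<longrightarrow> r = r'"
    using relay_eq_iff by auto
  show "well_behaved (dsum (piece (dV D \<union> Ports)) (piece Relays)) (pending_wires {})"
    unfolding dsum_left_right by (rule well_behaved_pending_wires_all)
  show "\<exists>DW. wiring (dsum (piece (dV D \<union> Ports)) (piece Relays)) (pending_wires {}) DW \<and>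
          coherent (dsum (piece (dV D \<union> Ports)) (piece Relays)) (pending_wires {}) DW"
    unfolding dsum_left_right using wiring_partly_wired[of "{}"] coherent_pending_wires_all
    by (auto simp: partly_wired_empty)
qed

lemma cut_decomposition:
  assumes "dV D \<noteq> {}"
  shows "\<exists>E D'. drag_expression E \<and> (\<forall>C\<in>set (components E). atomic_drag ar C) \<and>
                eval ar E D' \<and> same_drag D' D"
proof -
  obtain LP where LP: "set LP = left_blocks" "distinct LP"
    using finite_distinct_list[OF finite_left_blocks] by blast
  obtain LQ where LQ: "set LQ = right_blocks" "distinct LQ"
    using finite_distinct_list[OF finite_right_blocks] by blast
  have "LP \<noteq> []" using LP(1) Union_left_blocks assms by auto
  then have left: "eval ar (sum_expr piece LP) (piece (dV D \<union> Ports))"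
    using eval_sum_blocks[of LP] LP Union_left_blocks by simp
  show ?thesis
  proof (cases "Slots = {}")
    \<comment> \<open>without edges there are no relays, and an empty sum is not atomic\<close>
    case True
    then have "same_drag (piece (dV D \<union> Ports)) D"
      using same_drag_partly_wired_all partly_wired_empty by simp
    then show ?thesis
      using left atomic_expression_of_blocks[OF components_sum_expr[OF \<open>LP \<noteq> []\<close>]] LP by blast
  next
    case False
    let ?E = "DProd (sum_expr piece LP) ((\<lambda>e. (port e, relay e)) ` Slots)
                ((\<lambda>e. (relay e, head e)) ` Slots) (sum_expr piece LQ)"
    have "LQ \<noteq> []" using LQ(1) False unfolding right_blocks_def by auto
    then have "eval ar (sum_expr piece LQ) (piece Relays)"
      using eval_sum_blocks[of LQ] LQ Union_right_blocks by simp
    moreover have "wiring (dsum (piece (dV D \<union> Ports)) (piece Relays)) (pending_wires {})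
                     (partly_wired Slots)"
      using wiring_partly_wired[of "{}"] by (simp add: partly_wired_empty dsum_left_right)
    ultimately have "eval ar ?E (partly_wired Slots)"
      using eval_prod[OF left _ disjoint_drags_cut switchboard_cut] by (simp add: pending_wires_all)
    moreover have "components ?E = map piece (LP @ LQ)"
      using components_sum_expr[OF \<open>LP \<noteq> []\<close>, of piece]
        components_sum_expr[OF \<open>LQ \<noteq> []\<close>, of piece] by simp
    moreover have "distinct (LP @ LQ)" using LP LQ left_right_blocks_disjoint by auto
    ultimately show ?thesis
      using atomic_expression_of_blocks[of ?E "LP @ LQ"] same_drag_partly_wired_all LP LQ by auto
  qed
qed

end

theorem mainTheorem10:
  fixes ar :: "'f \<Rightarrow> nat" and D :: "('v, 'f, 'x) drag"
  assumes "infinite (UNIV :: 'v set)" and "infinite (UNIV :: 'x set)"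
    and "is_drag ar D" and "dV D \<noteq> {}"
  shows "\<exists>E D'. drag_expression E \<and> (\<forall>C\<in>set (components E). atomic_drag ar C) \<and>
                eval ar E D' \<and> same_drag D' D"
proof -
  let ?S = "edge_slots D"
  have fin: "finite ?S" "finite (dV D)" "finite (dvars D)"
    using assms(3) finite_edge_slots finite_dvars unfolding is_drag_def by blast+
  obtain port :: "'v \<times> nat \<Rightarrow> 'v" where port: "inj_on port ?S" "port ` ?S \<inter> dV D = {}"
    using exists_inj_on_fresh[OF fin(1,2) assms(1)] by blast
  obtain relay :: "'v \<times> nat \<Rightarrow> 'v"
    where relay: "inj_on relay ?S" "relay ` ?S \<inter> (dV D \<union> port ` ?S) = {}"
    using exists_inj_on_fresh[of ?S "dV D \<union> port ` ?S"] fin assms(1) by blast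
  obtain port_var :: "'v \<times> nat \<Rightarrow> 'x"
    where port_var: "inj_on port_var ?S" "port_var ` ?S \<inter> dvars D = {}"
    using exists_inj_on_fresh[OF fin(1,3) assms(2)] by blast
  obtain relay_var :: "'v \<times> nat \<Rightarrow> 'x"
    where relay_var: "inj_on relay_var ?S" "relay_var ` ?S \<inter> (dvars D \<union> port_var ` ?S) = {}"
    using exists_inj_on_fresh[of ?S "dvars D \<union> port_var ` ?S"] fin assms(2) by blast
  interpret edge_cutting ar D port relay port_var relay_var
    using assms(3) port relay port_var relay_var by unfold_locales blast+
  show ?thesis using cut_decomposition[OF assms(4)] .
qed

end
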